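(* Suppose $k\ge2$ and $n\ge k+2$. Then for every $1\le\ell\le k+1$, $$\mathrm{Ker}(\Theta_1)\subset\mathrm{Ker}(\Theta_\ell)$$ as subgroups of $H^*\otimes_\mathbb{Z}\mathcal{L}_n(k+1)$ (with $\Theta_\ell$ restricted to $H^*\otimes_\mathbb{Z}\mathcal{L}_n(k+1)$).
   Context: $F_n$ is the free group of rank $n$, $H=F_n/[F_n,F_n]\cong\mathbb{Z}^n$, $H^*=\mathrm{Hom}(H,\mathbb{Z})$. $\mathcal{L}_n(m)\subset H^{\otimes m}$ is the degree-$m$ part of the free Lie algebra on $H$, i.e. the $\mathbb{Z}$-span of left-normed brackets $[a_1,\dots,a_m]$ computed with $[x,y]=x\otimes y-y\otimes x$ (equivalently the $m$th graded quotient of the lower central series of $F_n$). For $m\ge0$, $\mathcal{C}_n(m)$ is the quotient of $H^{\otimes m}$ by the subgroup generated by all $a_1\otimes a_2\otimes\cdots\otimes a_m-a_2\otimes\cdots\otimes a_m\otimes a_1$ ($\mathcal{C}_n(0)=\mathbb{Z}$), with projection $\pi_m$. For $1\le\ell\le k+1$: $\Phi_{1,\ell+1}:H^*\otimes H^{\otimes k+1}\to H^{\otimes k}$, $f\otimes a_1\otimes\cdots\otimes a_{k+1}\mapsto f(a_\ell)\,a_1\otimes\cdots\otimes\widehat{a_\ell}\otimes\cdots\otimes a_{k+1}$; $\varpi_\ell:H^{\otimes k}\to\mathcal{C}_n(\ell-1)\otimes\mathcal{C}_n(k-\ell+1)$, $a_1\otimes\cdots\otimes a_k\mapsto\pi_{\ell-1}(a_1\otimes\cdots\otimes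 a_{\ell-1})\otimes\pi_{k-\ell+1}(a_\ell\otimes\cdots\otimes a_k)$; and $\Theta_\ell=\varpi_\ell\circ\Phi_{1,\ell+1}$. (So $\Theta_1=\pi_k\circ\Phi_{1,2}$ up to the identification $\mathbb{Z}\otimes\mathcal{C}_n(k)=\mathcal{C}_n(k)$.) *)

theory Defs
  imports Main "HOL-Library.Function_Algebras"
begin

text \<open>H = Z^n with basis e_0,...,e_(n-1). An element of the free abelian group
  H^(tensor m) is a finitely supported function from words (nat list) to int; the word
  [a1,...,am] stands for the basis tensor e_a1 (x) ... (x) e_am. An element of
  H^* (tensor) H^(tensor m) is a function (nat \<times> nat list) \<Rightarrow> int, the pair (i,w) standing
  for the basis tensor e_i^* (x) w, where e_i^* is the dual basis.\<close>

definition words :: "nat \<Rightarrow> nat \<Rightarrow> nat list set" where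
  "words n m = {w. length w = m \<and> set w \<subseteq> {..<n}}"

definition basis :: "nat list \<Rightarrow> (nat list \<Rightarrow> int)" where
  "basis w = (\<lambda>u. if u = w then 1 else 0)"

definition tmult :: "(nat list \<Rightarrow> int) \<Rightarrow> (nat list \<Rightarrow> int) \<Rightarrow> (nat list \<Rightarrow> int)" where
  "tmult x y = (\<lambda>w. \<Sum>i\<le>length w. x (take i w) * y (drop i w))"

definition bracket :: "(nat list \<Rightarrow> int) \<Rightarrow> (nat list \<Rightarrow> int) \<Rightarrow> (nat list \<Rightarrow> int)" where
  "bracket x y = tmult x y - tmult y x"

text \<open>Left-normed bracket [a1, a2, ..., am] = [...[[a1,a2],a3],...,am] of basis vectors.\<close>
fun lbracket :: "nat list \<Rightarrow> (nat list \<Rightarrow> int)" where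
  "lbracket [] = 0"
| "lbracket (a # as) = foldl (\<lambda>acc b. bracket acc (basis [b])) (basis [a]) as"

inductive_set zspan :: "('a \<Rightarrow> int) set \<Rightarrow> ('a \<Rightarrow> int) set" for S where
  zero: "0 \<in> zspan S"
| add: "y \<in> zspan S \<Longrightarrow> x \<in> S \<Longrightarrow> y + x \<in> zspan S"
| diff: "y \<in> zspan S \<Longrightarrow> x \<in> S \<Longrightarrow> y - x \<in> zspan S"

definition dtens :: "nat \<Rightarrow> (nat list \<Rightarrow> int) \<Rightarrow> (nat \<times> nat list \<Rightarrow> int)" where
  "dtens i x = (\<lambda>(j, w). if j = i then x w else 0)"

text \<open>H^* (x) L_n(k+1), as a subgroup of H^* (x) H^(tensor (k+1)): spanned by
  e_i^* (x) [a1,...,a_(k+1)] with a_j basis vectors (multilinearity).\<close>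
definition dualLie :: "nat \<Rightarrow> nat \<Rightarrow> (nat \<times> nat list \<Rightarrow> int) set" where
  "dualLie n k = zspan {dtens i (lbracket a) | i a. i < n \<and> a \<in> words n (k + 1)}"

text \<open>Phi_(1,l+1) : H^* (x) H^(tensor (k+1)) \<rightarrow> H^(tensor k), extended linearly from
  e_i^* (x) a1...a_(k+1) \<mapsto> e_i^*(a_l) a1...(a_l omitted)...a_(k+1).\<close>
definition Phi :: "nat \<Rightarrow> nat \<Rightarrow> nat \<Rightarrow> (nat \<times> nat list \<Rightarrow> int) \<Rightarrow> (nat list \<Rightarrow> int)" where
  "Phi n k l x = (\<lambda>u. \<Sum>i<n. \<Sum>w\<in>words n (k + 1).
       if w ! (l - 1) = i \<and> take (l - 1) w @ drop l w = u then x (i, w) else 0)"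

text \<open>C_n(l-1) (x) C_n(k-l+1) = H^(tensor k) / (R_(l-1) (x) H^(tensor (k-l+1)) + H^(tensor (l-1)) (x) R_(k-l+1)),
  where R_m is the subgroup generated by the cyclic relations. This is the subgroup
  that is the kernel of varpi_l.\<close>
definition cycRel :: "nat \<Rightarrow> nat \<Rightarrow> nat \<Rightarrow> (nat list \<Rightarrow> int) set" where
  "cycRel n k l = zspan
     ({basis (u @ v) - basis (rotate1 u @ v) | u v. u \<in> words n (l - 1) \<and> v \<in> words n (k + 1 - l)}
    \<union> {basis (u @ v) - basis (u @ rotate1 v) | u v. u \<in> words n (l - 1) \<and> v \<in> words n (k + 1 - l)})"

text \<open>Kernel of Theta_l = varpi_l o Phi_(1,l+1), restricted to H^* (x) L_n(k+1).\<close>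
definition kerTheta :: "nat \<Rightarrow> nat \<Rightarrow> nat \<Rightarrow> (nat \<times> nat list \<Rightarrow> int) set" where
  "kerTheta n k l = {x \<in> dualLie n k. Phi n k l x \<in> cycRel n k l}"

end

theory Submission
  imports Defs "HOL-Library.Multiset" HOL.Modules
begin

text \<open>
  A Lie element \<open>X\<close> is orthogonal to every shuffle product of two nonempty words (the easy half of
  Ree's theorem). Peeling off letters, this gives \<open>X (u j v) = (-1)\<^sup>|\<^sup>u\<^sup>| \<Sum> X (j w)\<close>, the sum running
  over the shuffles \<open>w\<close> of \<open>rev u\<close> and \<open>v\<close>. Hence on \<open>H\<^sup>* \<otimes> L\<^sub>n(k+1)\<close> the contraction
  \<open>\<Phi>\<^sub>1\<^sub>,\<^sub>\<ell>\<^sub>+\<^sub>1\<close> factors as \<open>T \<circ> \<Phi>\<^sub>1\<^sub>,\<^sub>2\<close> for an explicit linear map \<open>T\<close> of \<open>H\<^sup>\<otimes>\<^sup>k\<close>. By the duality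
  between shuffles and deshuffles, \<open>T\<close> sends a word \<open>w\<close> to \<open>\<plusminus>\<close> the sum of the words \<open>rev a @ b\<close>
  over the deshuffles \<open>(a, b)\<close> of \<open>w\<close> with \<open>|a| = \<ell> - 1\<close>; comparing the deshuffles of \<open>c # w\<close> and
  \<open>w @ [c]\<close> term by term shows that \<open>T\<close> maps every cyclic relation into the relations defining
  \<open>C\<^sub>n(\<ell>-1) \<otimes> C\<^sub>n(k-\<ell>+1)\<close>.
\<close>

section \<open>Shuffles and deshuffles\<close>

lemma sum_mset_subtractf:
  fixes f g :: "'a \<Rightarrow> 'b::ab_group_add"
  shows "(\<Sum>x\<in>#M. f x - g x) = (\<Sum>x\<in>#M. f x) - (\<Sum>x\<in>#M. g x)"
  by (induction M) simp_all

lemma sum_mset_fun_apply: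
  fixes f :: "'a \<Rightarrow> 'b \<Rightarrow> 'c::comm_monoid_add"
  shows "(\<Sum>x\<in>#M. f x) z = (\<Sum>x\<in>#M. f x z)"
  by (induction M) simp_all

lemma count_image_mset_Cons:
  "count (image_mset ((#) x) M) (c # w) = (if x = c then count M w else 0)"
  by (induction M) auto

lemma count_image_mset_Cons_fst:
  "count (image_mset (\<lambda>(a, b). (x # a, b)) M) (a0, b0) =
     (case a0 of [] \<Rightarrow> 0 | y # a \<Rightarrow> if x = y then count M (a, b0) else 0)"
  by (induction M) (auto split: list.split)

lemma count_image_mset_Cons_snd:
  "count (image_mset (\<lambda>(a, b). (a, x # b)) M) (a0, b0) =
     (case b0 of [] \<Rightarrow> 0 | y # b \<Rightarrow> if x = y then count M (a0, b) else 0)"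
  by (induction M) (auto split: list.split)

text \<open>Shuffles are counted with multiplicity, unlike in \<open>List.shuffles\<close>.\<close>

fun shuffle :: "'a list \<Rightarrow> 'a list \<Rightarrow> 'a list multiset" where
  "shuffle [] ys = {#ys#}"
| "shuffle xs [] = {#xs#}"
| "shuffle (x # xs) (y # ys) =
     image_mset ((#) x) (shuffle xs (y # ys)) + image_mset ((#) y) (shuffle (x # xs) ys)"

lemma shuffle_Nil_right [simp]: "shuffle xs [] = {#xs#}"
  by (cases xs) auto

lemma shuffle_snoc_snoc:
  "shuffle (xs @ [a]) (ys @ [b]) =
     image_mset (\<lambda>w. w @ [a]) (shuffle xs (ys @ [b])) + image_mset (\<lambda>w. w @ [b]) (shuffle (xs @ [a]) ys)"
proof (induction xs ys rule: shuffle.induct)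
  case (1 ys)
  show ?case by (induction ys) (auto simp: multiset.map_comp o_def)
next
  case (2 x xs)
  show ?case by (induction xs arbitrary: x) (auto simp: multiset.map_comp o_def)
next
  case (3 x xs y ys)
  then show ?case by (simp add: multiset.map_comp o_def add_ac)
qed

lemma length_in_shuffle: "w \<in># shuffle xs ys \<Longrightarrow> length w = length xs + length ys"
  by (induction xs ys arbitrary: w rule: shuffle.induct) auto

lemma set_in_shuffle: "w \<in># shuffle xs ys \<Longrightarrow> set w = set xs \<union> set ys"
  by (induction xs ys arbitrary: w rule: shuffle.induct) auto

lemma count_shuffle_Cons:
  "count (shuffle xs ys) (c # w) =
     (case xs of [] \<Rightarrow> 0 | x # xs' \<Rightarrow> if x = c then count (shuffle xs' ys) w else 0)
   + (case ys of [] \<Rightarrow> 0 | y # ys' \<Rightarrow> if y = c then count (shuffle xs ys') w else 0)"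
  by (induction xs ys rule: shuffle.induct) (auto simp: count_image_mset_Cons split: list.split)

fun deshuffle :: "'a list \<Rightarrow> ('a list \<times> 'a list) multiset" where
  "deshuffle [] = {#([], [])#}"
| "deshuffle (c # w) =
     image_mset (\<lambda>(a, b). (c # a, b)) (deshuffle w) + image_mset (\<lambda>(a, b). (a, c # b)) (deshuffle w)"

lemma in_deshuffle:
  "(a, b) \<in># deshuffle w \<Longrightarrow> length a + length b = length w \<and> set a \<union> set b = set w"
  by (induction w arbitrary: a b) force+

lemma deshuffle_snoc:
  "deshuffle (w @ [c]) =
     image_mset (\<lambda>(a, b). (a @ [c], b)) (deshuffle w) + image_mset (\<lambda>(a, b). (a, b @ [c])) (deshuffle w)"
  by (induction w) (auto simp: multiset.map_comp o_def case_prod_beta add_ac)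

lemma count_shuffle_eq_count_deshuffle: "count (shuffle a b) w = count (deshuffle w) (a, b)"
proof (induction w arbitrary: a b)
  case Nil
  show ?case
    using length_in_shuffle[of "[]" a b] by (cases "a = [] \<and> b = []") (auto simp: count_eq_zero_iff)
next
  case (Cons c w)
  show ?case
    by (simp add: Cons.IH[symmetric] count_shuffle_Cons count_image_mset_Cons_fst
        count_image_mset_Cons_snd split: list.split)
qed

section \<open>Lie elements are orthogonal to shuffles\<close>

lemma drop_snoc_eq_singleton_iff:
  "i \<le> Suc (length ys) \<Longrightarrow> drop i (ys @ [y]) = [b] \<longleftrightarrow> i = length ys \<and> y = b"
  by (cases "i \<le> length ys") auto

lemma tmult_basis_right:
  "tmult X (basis [b]) z = (if z \<noteq> [] \<and> last z = b then X (butlast z) else 0)"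
proof (cases z rule: rev_cases)
  case (snoc ys y)
  then have "tmult X (basis [b]) z =
      (\<Sum>i\<le>length z. if i = length ys then if y = b then X ys else 0 else 0)"
    unfolding tmult_def
    by (intro sum.cong) (auto simp: basis_def drop_snoc_eq_singleton_iff simp del: drop_append)
  then show ?thesis using snoc by (simp add: sum.delta)
qed (simp add: tmult_def basis_def)

lemma tmult_basis_left:
  "tmult (basis [b]) X z = (if z \<noteq> [] \<and> hd z = b then X (tl z) else 0)"
proof (cases z)
  case (Cons y ys)
  then have "tmult (basis [b]) X z = (\<Sum>i\<le>length z. if i = 1 then if y = b then X ys else 0 else 0)"
    unfolding tmult_def
    by (intro sum.cong) (auto simp: basis_def take_Cons split: nat.split)
  then show ?thesis using Cons by (simp add: sum.delta del: sum.atMost_Suc)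
qed (simp add: tmult_def basis_def)

definition shuffle_orthogonal :: "('a list \<Rightarrow> 'b::comm_monoid_add) \<Rightarrow> bool" where
  "shuffle_orthogonal X \<longleftrightarrow> (\<forall>p q. p \<noteq> [] \<longrightarrow> q \<noteq> [] \<longrightarrow> (\<Sum>w\<in>#shuffle p q. X w) = 0)"

lemma sum_shuffle_if_orthogonal:
  "shuffle_orthogonal X \<Longrightarrow>
     (\<Sum>w\<in>#shuffle p q. X w) = (if p = [] then X q else if q = [] then X p else 0)"
  unfolding shuffle_orthogonal_def by auto

lemma shuffle_orthogonal_letter: "shuffle_orthogonal (basis [a])"
  unfolding shuffle_orthogonal_def
proof (intro allI impI)
  fix p q :: "nat list" assume "p \<noteq> []" "q \<noteq> []"
  then have "basis [a] w = 0" if "w \<in># shuffle p q" for w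
    using length_in_shuffle[OF that] by (auto simp: basis_def neq_Nil_conv)
  then show "(\<Sum>w\<in>#shuffle p q. basis [a] w) = 0"
    by (simp cong: image_mset_cong)
qed

lemma shuffle_orthogonal_bracket_letter:
  assumes X: "shuffle_orthogonal X"
  shows "shuffle_orthogonal (bracket X (basis [b]))"
  unfolding shuffle_orthogonal_def
proof (intro allI impI)
  fix p q :: "nat list" assume p: "p \<noteq> []" and q: "q \<noteq> []"
  define V where "V = (if p = [b] then X q else 0) + (if q = [b] then X p else 0)"
  have right: "(\<Sum>w\<in>#shuffle p q. tmult X (basis [b]) w) = V"
  proof -
    obtain p' a q' c where pq: "p = p' @ [a]" "q = q' @ [c]"
      using p q by (metis rev_exhaust)
    have "p = [b] \<longleftrightarrow> p' = [] \<and> a = b" "q = [b] \<longleftrightarrow> q' = [] \<and> c = b"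
      using pq by auto
    have "(\<Sum>w\<in>#shuffle p q. tmult X (basis [b]) w) =
        (if a = b then \<Sum>w\<in>#shuffle p' q. X w else 0) + (if c = b then \<Sum>w\<in>#shuffle p q'. X w else 0)"
      using pq by (simp add: tmult_basis_right shuffle_snoc_snoc multiset.map_comp o_def)
    then show ?thesis
      using sum_shuffle_if_orthogonal[OF X, of p' q] sum_shuffle_if_orthogonal[OF X, of p q'] p q
        \<open>p = [b] \<longleftrightarrow> p' = [] \<and> a = b\<close> \<open>q = [b] \<longleftrightarrow> q' = [] \<and> c = b\<close>
      by (simp add: V_def)
  qed
  have left: "(\<Sum>w\<in>#shuffle p q. tmult (basis [b]) X w) = V"
  proof -
    obtain p' a q' c where pq: "p = a # p'" "q = c # q'"
      using p q by (metis list.exhaust)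
    have "p = [b] \<longleftrightarrow> p' = [] \<and> a = b" "q = [b] \<longleftrightarrow> q' = [] \<and> c = b"
      using pq by auto
    have "(\<Sum>w\<in>#shuffle p q. tmult (basis [b]) X w) =
        (if a = b then \<Sum>w\<in>#shuffle p' q. X w else 0) + (if c = b then \<Sum>w\<in>#shuffle p q'. X w else 0)"
      using pq by (simp add: tmult_basis_left multiset.map_comp o_def)
    then show ?thesis
      using sum_shuffle_if_orthogonal[OF X, of p' q] sum_shuffle_if_orthogonal[OF X, of p q'] p q
        \<open>p = [b] \<longleftrightarrow> p' = [] \<and> a = b\<close> \<open>q = [b] \<longleftrightarrow> q' = [] \<and> c = b\<close>
      by (simp add: V_def)
  qed
  show "(\<Sum>w\<in>#shuffle p q. bracket X (basis [b]) w) = 0"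
    using left right by (simp add: bracket_def sum_mset_subtractf)
qed

lemma shuffle_orthogonal_lbracket: "shuffle_orthogonal (lbracket a)"
proof (cases a)
  case Nil
  then show ?thesis by (simp add: shuffle_orthogonal_def)
next
  case (Cons a as)
  have "shuffle_orthogonal (foldl (\<lambda>acc b. bracket acc (basis [b])) X as)"
    if "shuffle_orthogonal X" for X
    using that by (induction as arbitrary: X) (auto intro: shuffle_orthogonal_bracket_letter)
  then show ?thesis
    using Cons shuffle_orthogonal_letter by simp
qed

lemma shuffle_orthogonal_move_letter:
  fixes X :: "'a list \<Rightarrow> 'b::comm_ring_1"
  assumes "shuffle_orthogonal X"
  shows "X (u @ j # v) = (-1) ^ length u * (\<Sum>w\<in>#shuffle (rev u) v. X (j # w))"
proof (induction u arbitrary: j v rule: rev_induct)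
  case (snoc c u)
  have "(\<Sum>w\<in>#shuffle (c # rev u) (j # v). X w) = 0"
    using assms unfolding shuffle_orthogonal_def by blast
  then have "(\<Sum>w\<in>#shuffle (rev u) (j # v). X (c # w)) = - (\<Sum>w\<in>#shuffle (c # rev u) v. X (j # w))"
    by (simp add: multiset.map_comp o_def eq_neg_iff_add_eq_0)
  then show ?case
    using snoc.IH[of c "j # v"] by simp
qed simp

lemma zspan_generator: "x \<in> S \<Longrightarrow> x \<in> zspan S"
  using zspan.add[OF zspan.zero] by simp

lemma zspan_add:
  assumes "a \<in> zspan S" and "b \<in> zspan S"
  shows "a + b \<in> zspan S"
  using assms(2)
proof (induction b rule: zspan.induct)
  case (add y x)
  have "(a + y) + x \<in> zspan S" by (rule zspan.add[OF add.IH add.hyps(2)])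
  then show ?case by (simp only: add.assoc)
next
  case (diff y x)
  have "(a + y) - x \<in> zspan S" by (rule zspan.diff[OF diff.IH diff.hyps(2)])
  then show ?case by (simp only: add_diff_eq)
qed (simp add: assms(1))

lemma zspan_uminus: "a \<in> zspan S \<Longrightarrow> - a \<in> zspan S"
proof (induction a rule: zspan.induct)
  case (add y x)
  have "- y - x \<in> zspan S" by (rule zspan.diff[OF add.IH add.hyps(2)])
  then show ?case by (simp only: minus_add_distrib diff_conv_add_uminus)
next
  case (diff y x)
  have "- y + x \<in> zspan S" by (rule zspan.add[OF diff.IH diff.hyps(2)])
  then show ?case by (simp only: minus_diff_eq uminus_add_conv_diff)
qed (simp only: minus_zero zspan.zero)

lemma zspan_sum_mset: "(\<And>p. p \<in># M \<Longrightarrow> g p \<in> zspan S) \<Longrightarrow> (\<Sum>p\<in>#M. g p) \<in> zspan S"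
  by (induction M) (auto intro: zspan_add zspan.zero)

lemma zspan_neg_one_power_scale:
  "f \<in> zspan S \<Longrightarrow> (\<lambda>z. (-1) ^ m * f z) \<in> zspan S"
proof (cases "even m")
  case False
  assume "f \<in> zspan S"
  then have "- f \<in> zspan S" by (rule zspan_uminus)
  moreover have "(\<lambda>z. (-1) ^ m * f z) = - f" using False by (simp add: fun_eq_iff)
  ultimately show ?thesis by (simp only:)
qed simp

lemma additive_image_zspan:
  assumes L: "additive L" and "a \<in> zspan S" and gen: "\<And>s. s \<in> S \<Longrightarrow> L s \<in> zspan S'"
  shows "L a \<in> zspan S'"
  using assms(2)
proof (induction a rule: zspan.induct)
  case zero
  show ?case by (simp only: additive.zero[OF L] zspan.zero)
next
  case (add y x)
  then show ?case by (simp only: additive.add[OF L] zspan_add gen)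
next
  case (diff y x)
  then show ?case
    using zspan_add[OF diff.IH zspan_uminus[OF gen[OF diff.hyps(2)]]]
    by (metis additive.diff[OF L] diff_conv_add_uminus)
qed

lemma additive_eq_on_zspan:
  assumes L: "additive L" and L': "additive L'" and "a \<in> zspan S"
    and gen: "\<And>s. s \<in> S \<Longrightarrow> L s = L' s"
  shows "L a = L' a"
  using assms(3)
  by (induction a rule: zspan.induct)
    (simp_all only: additive.zero[OF L] additive.zero[OF L'] additive.add[OF L] additive.add[OF L']
      additive.diff[OF L] additive.diff[OF L'] gen)

section \<open>Factoring the contractions through the first one\<close>

lemma finite_words: "finite (words n m)"
  using finite_lists_length_eq[of "{..<n}" m] by (simp add: words_def conj_commute)

lemma remove_nth_eq_iff_insert_nth:
  assumes "length w = Suc k" and "p \<le> k" and "length z = k"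
  shows "w ! p = i \<and> take p w @ drop (Suc p) w = z \<longleftrightarrow> w = take p z @ i # drop p z"
proof
  assume "w ! p = i \<and> take p w @ drop (Suc p) w = z"
  then show "w = take p z @ i # drop p z"
    using assms id_take_nth_drop[of p w] by auto
next
  assume "w = take p z @ i # drop p z"
  then show "w ! p = i \<and> take p w @ drop (Suc p) w = z"
    using assms by (simp add: nth_append)
qed

lemma sum_lessThan_dtens:
  "(\<Sum>j<n. if P j then dtens i X (j, w) else 0) = (if i < n \<and> P i then X w else 0)"
proof -
  have "(\<Sum>j<n. if P j then dtens i X (j, w) else 0) = (\<Sum>j<n. if j = i then if P i then X w else 0 else 0)"
    by (rule sum.cong) (auto simp: dtens_def)
  then show ?thesis by simp
qed

lemma Phi_dtens:
  assumes l: "1 \<le> l" "l \<le> k + 1"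
  shows "Phi n k l (dtens i X) z =
    (if z \<in> words n k \<and> i < n then X (take (l - 1) z @ i # drop (l - 1) z) else 0)"
proof -
  define w0 where "w0 = take (l - 1) z @ i # drop (l - 1) z"
  have iff: "(i < n \<and> w ! (l - 1) = i \<and> take (l - 1) w @ drop l w = z) \<longleftrightarrow>
      w = w0 \<and> z \<in> words n k \<and> i < n" if "w \<in> words n (k + 1)" for w
  proof -
    have "take (l - 1) w @ drop l w = z \<Longrightarrow> z \<in> words n k"
      using that l by (auto simp: words_def dest!: in_set_takeD in_set_dropD)
    then show ?thesis
      using that l remove_nth_eq_iff_insert_nth[of w k "l - 1" z i]
      by (auto simp: words_def w0_def)
  qed
  have "Phi n k l (dtens i X) z =
      (\<Sum>w\<in>words n (k + 1). if w = w0 then if z \<in> words n k \<and> i < n then X w else 0 else 0)"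
    unfolding Phi_def
  proof (subst sum.swap, intro sum.cong refl)
    fix w assume "w \<in> words n (k + 1)"
    then show "(\<Sum>j<n. if w ! (l - 1) = j \<and> take (l - 1) w @ drop l w = z then dtens i X (j, w) else 0)
        = (if w = w0 then if z \<in> words n k \<and> i < n then X w else 0 else 0)"
      unfolding sum_lessThan_dtens iff[OF \<open>w \<in> words n (k + 1)\<close>] by simp
  qed
  moreover have "z \<in> words n k \<Longrightarrow> i < n \<Longrightarrow> w0 \<in> words n (k + 1)"
    using l by (auto simp: words_def w0_def dest: in_set_takeD in_set_dropD)
  ultimately show ?thesis
    using finite_words by (auto simp: sum.delta' w0_def)
qed

lemma additive_Phi: "additive (Phi n k l)"
  by unfold_locales (auto simp: Phi_def fun_eq_iff sum.distrib[symmetric] intro!: sum.cong)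

definition shuffle_transfer :: "nat \<Rightarrow> nat \<Rightarrow> nat \<Rightarrow> (nat list \<Rightarrow> int) \<Rightarrow> (nat list \<Rightarrow> int)" where
  "shuffle_transfer n k l f z =
     (if z \<in> words n k
      then (-1) ^ (l - 1) * (\<Sum>w\<in>#shuffle (rev (take (l - 1) z)) (drop (l - 1) z). f w)
      else 0)"

lemma additive_shuffle_transfer: "additive (shuffle_transfer n k l)"
  by unfold_locales (simp add: shuffle_transfer_def fun_eq_iff sum_mset.distrib algebra_simps)

lemma Phi_dtens_lbracket_eq_shuffle_transfer:
  assumes l: "1 \<le> l" "l \<le> k + 1" and i: "i < n"
  shows "Phi n k l (dtens i (lbracket a)) = shuffle_transfer n k l (Phi n k 1 (dtens i (lbracket a)))"
proof
  fix z
  show "Phi n k l (dtens i (lbracket a)) z = shuffle_transfer n k l (Phi n k 1 (dtens i (lbracket a))) z"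
  proof (cases "z \<in> words n k")
    case True
    define u v where "u = take (l - 1) z" and "v = drop (l - 1) z"
    have Phi_1: "Phi n k 1 (dtens i (lbracket a)) w = lbracket a (i # w)"
      if "w \<in># shuffle (rev u) v" for w
    proof -
      have "w \<in> words n k"
        using True l length_in_shuffle[OF that] set_in_shuffle[OF that]
        by (auto simp: words_def u_def v_def dest!: in_set_takeD in_set_dropD)
      then show ?thesis using Phi_dtens[of 1 k n i "lbracket a" w] i by simp
    qed
    have "length u = l - 1"
      using True l by (simp add: u_def words_def)
    then have "Phi n k l (dtens i (lbracket a)) z =
        (-1) ^ (l - 1) * (\<Sum>w\<in>#shuffle (rev u) v. lbracket a (i # w))"
      using Phi_dtens[OF l] True i shuffle_orthogonal_move_letter[OF shuffle_orthogonal_lbracket]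
      by (simp add: u_def v_def)
    also have "\<dots> = shuffle_transfer n k l (Phi n k 1 (dtens i (lbracket a))) z"
      unfolding shuffle_transfer_def u_def[symmetric] v_def[symmetric]
      using True Phi_1 by (simp cong: image_mset_cong)
    finally show ?thesis .
  qed (simp add: Phi_dtens[OF l] shuffle_transfer_def)
qed

lemma Phi_eq_shuffle_transfer_Phi_1:
  assumes l: "1 \<le> l" "l \<le> k + 1" and x: "x \<in> dualLie n k"
  shows "Phi n k l x = shuffle_transfer n k l (Phi n k 1 x)"
proof -
  have "additive (\<lambda>x. shuffle_transfer n k l (Phi n k 1 x))"
    by unfold_locales
      (simp only: additive.add[OF additive_Phi] additive.add[OF additive_shuffle_transfer])
  then show ?thesis
    using x Phi_dtens_lbracket_eq_shuffle_transfer[OF l] unfolding dualLie_def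
    by (auto elim!: additive_eq_on_zspan[OF additive_Phi])
qed

section \<open>The transfer map preserves cyclic relations\<close>

definition rev_concat_basis :: "nat \<Rightarrow> nat list \<times> nat list \<Rightarrow> (nat list \<Rightarrow> int)" where
  "rev_concat_basis p = (\<lambda>(a, b). if length a = p then basis (rev a @ b) else 0)"

definition rev_deshuffle_sum :: "nat \<Rightarrow> nat list \<Rightarrow> (nat list \<Rightarrow> int)" where
  "rev_deshuffle_sum p w = (\<Sum>q\<in>#deshuffle w. rev_concat_basis p q)"

lemma shuffle_transfer_basis:
  assumes w: "w \<in> words n k" and l: "l \<le> k + 1"
  shows "shuffle_transfer n k l (basis w) = (\<lambda>z. (-1) ^ (l - 1) * rev_deshuffle_sum (l - 1) w z)"
proof
  fix z
  have rds: "rev_deshuffle_sum (l - 1) w z =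
      (\<Sum>(a, b)\<in>#deshuffle w. if length a = l - 1 \<and> rev a @ b = z then 1 else 0)"
    unfolding rev_deshuffle_sum_def sum_mset_fun_apply
    by (auto simp: basis_def rev_concat_basis_def intro!: arg_cong[of _ _ sum_mset] image_mset_cong)
  show "shuffle_transfer n k l (basis w) z = (-1) ^ (l - 1) * rev_deshuffle_sum (l - 1) w z"
  proof (cases "z \<in> words n k")
    case True
    define P where "P = (rev (take (l - 1) z), drop (l - 1) z)"
    have "(length a = l - 1 \<and> rev a @ b = z) \<longleftrightarrow> (a, b) = P" for a b
      using True l by (auto simp: P_def words_def)
    then have "rev_deshuffle_sum (l - 1) w z = int (count (deshuffle w) P)"
      unfolding rds by (simp add: case_prod_unfold sum_mset_delta)
    also have "\<dots> = (\<Sum>u\<in>#shuffle (rev (take (l - 1) z)) (drop (l - 1) z). basis w u)"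
      unfolding P_def basis_def sum_mset_delta count_shuffle_eq_count_deshuffle by simp
    finally show ?thesis
      using True by (simp add: shuffle_transfer_def)
  next
    case False
    have "rev a @ b \<in> words n k" if "(a, b) \<in># deshuffle w" for a b
      using w in_deshuffle[OF that] by (auto simp: words_def)
    then have "rev_deshuffle_sum (l - 1) w z = 0"
      unfolding rds using False by (auto intro!: sum_mset.neutral)
    then show ?thesis
      using False by (simp add: shuffle_transfer_def)
  qed
qed

lemma zero_in_cycRel: "0 \<in> cycRel n k l"
  unfolding cycRel_def by (rule zspan.zero)

lemma cycRel_add: "x \<in> cycRel n k l \<Longrightarrow> y \<in> cycRel n k l \<Longrightarrow> x + y \<in> cycRel n k l"
  unfolding cycRel_def by (rule zspan_add)

lemma cycRel_uminus: "x \<in> cycRel n k l \<Longrightarrow> - x \<in> cycRel n k l"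
  unfolding cycRel_def by (rule zspan_uminus)

lemma cycRel_rotate_prefix:
  "u \<in> words n (l - 1) \<Longrightarrow> v \<in> words n (k + 1 - l) \<Longrightarrow> basis (u @ v) - basis (rotate1 u @ v) \<in> cycRel n k l"
  unfolding cycRel_def by (rule zspan_generator) blast

lemma cycRel_rotate_suffix:
  "u \<in> words n (l - 1) \<Longrightarrow> v \<in> words n (k + 1 - l) \<Longrightarrow> basis (u @ v) - basis (u @ rotate1 v) \<in> cycRel n k l"
  unfolding cycRel_def by (rule zspan_generator) blast

text \<open>\<open>rev (a @ [c]) @ b\<close> and \<open>rev (c # a) @ b\<close> differ by rotating the prefix \<open>c # rev a\<close>.\<close>

lemma rev_concat_basis_move_into_fst_in_cycRel:
  assumes "c # a @ b \<in> words n k" and "1 \<le> l" "l \<le> k + 1"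
  shows "rev_concat_basis (l - 1) (c # a, b) - rev_concat_basis (l - 1) (a @ [c], b) \<in> cycRel n k l"
proof (cases "Suc (length a) = l - 1")
  case True
  then have "basis ((c # rev a) @ b) - basis (rotate1 (c # rev a) @ b) \<in> cycRel n k l"
    using assms by (intro cycRel_rotate_prefix) (auto simp: words_def)
  then show ?thesis
    using True cycRel_uminus by (fastforce simp: rev_concat_basis_def)
qed (simp add: rev_concat_basis_def zero_in_cycRel)

lemma rev_concat_basis_move_into_snd_in_cycRel:
  assumes "c # a @ b \<in> words n k" and "1 \<le> l" "l \<le> k + 1"
  shows "rev_concat_basis (l - 1) (a, c # b) - rev_concat_basis (l - 1) (a, b @ [c]) \<in> cycRel n k l"
proof (cases "length a = l - 1")
  case True
  then have "basis (rev a @ c # b) - basis (rev a @ rotate1 (c # b)) \<in> cycRel n k l"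
    using assms by (intro cycRel_rotate_suffix) (auto simp: words_def)
  then show ?thesis
    using True by (simp add: rev_concat_basis_def)
qed (simp add: rev_concat_basis_def zero_in_cycRel)

lemma rev_deshuffle_sum_rotate1_in_cycRel:
  assumes cw: "c # w \<in> words n k" and l: "1 \<le> l" "l \<le> k + 1"
  shows "rev_deshuffle_sum (l - 1) (c # w) - rev_deshuffle_sum (l - 1) (w @ [c]) \<in> cycRel n k l"
proof -
  let ?F = "rev_concat_basis (l - 1)"
  have "rev_deshuffle_sum (l - 1) (c # w) - rev_deshuffle_sum (l - 1) (w @ [c]) =
      (\<Sum>(a, b)\<in>#deshuffle w. (?F (c # a, b) - ?F (a @ [c], b)) + (?F (a, c # b) - ?F (a, b @ [c])))"
    unfolding rev_deshuffle_sum_def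
    by (simp add: deshuffle_snoc multiset.map_comp o_def case_prod_unfold sum_mset.distrib sum_mset_subtractf)
  also have "\<dots> \<in> cycRel n k l"
    unfolding cycRel_def
  proof (rule zspan_sum_mset, unfold cycRel_def[symmetric], clarify)
    fix a b assume "(a, b) \<in># deshuffle w"
    then have "c # a @ b \<in> words n k"
      using in_deshuffle cw by (fastforce simp: words_def)
    then show "?F (c # a, b) - ?F (a @ [c], b) + (?F (a, c # b) - ?F (a, b @ [c])) \<in> cycRel n k l"
      using l by (intro cycRel_add rev_concat_basis_move_into_fst_in_cycRel rev_concat_basis_move_into_snd_in_cycRel)
  qed
  finally show ?thesis .
qed

lemma shuffle_transfer_rotate1:
  assumes v: "v \<in> words n k" and l: "1 \<le> l" "l \<le> k + 1"
  shows "shuffle_transfer n k l (basis v - basis (rotate1 v)) \<in> cycRel n k l"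
proof (cases v)
  case Nil
  then show ?thesis
    by (simp add: additive.zero[OF additive_shuffle_transfer] cycRel_def zspan.zero)
next
  case (Cons c w)
  have "rotate1 v \<in> words n k"
    using v by (simp add: words_def)
  then have "shuffle_transfer n k l (basis v - basis (rotate1 v)) =
      (\<lambda>z. (-1) ^ (l - 1) * (rev_deshuffle_sum (l - 1) (c # w) - rev_deshuffle_sum (l - 1) (w @ [c])) z)"
    using v l Cons
    by (simp add: additive.diff[OF additive_shuffle_transfer] shuffle_transfer_basis fun_eq_iff algebra_simps)
  also have "\<dots> \<in> cycRel n k l"
    using rev_deshuffle_sum_rotate1_in_cycRel[OF v[unfolded Cons] l]
    unfolding cycRel_def by (rule zspan_neg_one_power_scale)
  finally show ?thesis .
qed

lemma shuffle_transfer_cycRel_1: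
  assumes s: "s \<in> cycRel n k 1" and l: "1 \<le> l" "l \<le> k + 1"
  shows "shuffle_transfer n k l s \<in> cycRel n k l"
proof -
  have gen: "shuffle_transfer n k l g \<in> cycRel n k l"
    if g: "g \<in> {basis (u @ v) - basis (rotate1 u @ v) | u v. u \<in> words n (1 - 1) \<and> v \<in> words n (k + 1 - 1)}
      \<union> {basis (u @ v) - basis (u @ rotate1 v) | u v. u \<in> words n (1 - 1) \<and> v \<in> words n (k + 1 - 1)}"
    for g
  proof -
    obtain v where "v \<in> words n k" and "g = 0 \<or> g = basis v - basis (rotate1 v)"
      using g by (auto simp: words_def)
    then show ?thesis
      using shuffle_transfer_rotate1[OF _ l]
      by (auto simp: additive.zero[OF additive_shuffle_transfer] cycRel_def zspan.zero)
  qed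
  show ?thesis
    unfolding cycRel_def
    by (rule additive_image_zspan[OF additive_shuffle_transfer s[unfolded cycRel_def] gen[unfolded cycRel_def]])
qed

theorem mainTheorem7:
  fixes n k l :: nat
  assumes "2 \<le> k" and "k + 2 \<le> n" and "1 \<le> l" and "l \<le> k + 1"
  shows "kerTheta n k 1 \<subseteq> kerTheta n k l"
proof
  fix x assume "x \<in> kerTheta n k 1"
  then have x: "x \<in> dualLie n k" and "Phi n k 1 x \<in> cycRel n k 1"
    unfolding kerTheta_def by auto
  then have "shuffle_transfer n k l (Phi n k 1 x) \<in> cycRel n k l"
    using assms by (intro shuffle_transfer_cycRel_1) auto
  then show "x \<in> kerTheta n k l"
    using x assms Phi_eq_shuffle_transfer_Phi_1[of l k x n] by (simp add: kerTheta_def)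
qed

end
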